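(* For every integer $d\ge 2$ and every integer $k$ with $d-1\le k\le\binom{d}{2}$, there exists a chopped vertical strip with $d$ vertices (hence $d-2$ cuts) having exactly $k$ short geodesics.
   Context: A chopped vertical strip with $d$ vertices consists of complex numbers $z_j=x_j+\sqrt{-1}\,y_j$, $j=1,\dots,d$, with pairwise distinct real parts and pairwise distinct imaginary parts, ordered so that $x_1<x_2<\dots<x_d$, together with, for each $j=2,\dots,d-1$, a choice of a vertical ray (cut) starting at $z_j$, either $\{x_j+\sqrt{-1}\,s: s\ge y_j\}$ or $\{x_j+\sqrt{-1}\,s: s\le y_j\}$. A short geodesic of the chopped strip is a straight segment $[z_i,z_j]$, $i\neq j$, that does not intersect any cut except possibly at its own endpoints. *)

theory Defs
  imports "HOL-Analysis.Analysis"
begin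

text \<open>A chopped vertical strip with d vertices: vertices z 1, ..., z d (complex numbers)
with pairwise distinct real parts and pairwise distinct imaginary parts, ordered by
increasing real part; for each j in 2..d-1 a cut direction up j (True: upward ray,
False: downward ray).  Values of z and up outside the relevant index range are irrelevant.\<close>

definition chopped_strip :: "nat \<Rightarrow> (nat \<Rightarrow> complex) \<Rightarrow> (nat \<Rightarrow> bool) \<Rightarrow> bool" where
  "chopped_strip d z up \<longleftrightarrow>
     (\<forall>i\<in>{1..d}. \<forall>j\<in>{1..d}. i \<noteq> j \<longrightarrow> Re (z i) \<noteq> Re (z j) \<and> Im (z i) \<noteq> Im (z j)) \<and>
     (\<forall>i\<in>{1..d}. \<forall>j\<in>{1..d}. i < j \<longrightarrow> Re (z i) < Re (z j))"

definition cut :: "(nat \<Rightarrow> complex) \<Rightarrow> (nat \<Rightarrow> bool) \<Rightarrow> nat \<Rightarrow> complex set" where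
  "cut z up j = {Complex (Re (z j)) s | s. if up j then Im (z j) \<le> s else s \<le> Im (z j)}"

definition short_geodesic :: "nat \<Rightarrow> (nat \<Rightarrow> complex) \<Rightarrow> (nat \<Rightarrow> bool) \<Rightarrow> nat \<Rightarrow> nat \<Rightarrow> bool" where
  "short_geodesic d z up i j \<longleftrightarrow>
     i \<in> {1..d} \<and> j \<in> {1..d} \<and> i \<noteq> j \<and>
     (\<forall>m\<in>{2..d-1}. closed_segment (z i) (z j) \<inter> cut z up m \<subseteq> {z i, z j})"

definition num_short_geodesics :: "nat \<Rightarrow> (nat \<Rightarrow> complex) \<Rightarrow> (nat \<Rightarrow> bool) \<Rightarrow> nat" where
  "num_short_geodesics d z up = card {{i, j} | i j. short_geodesic d z up i j}"

end

theory Submission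
  imports Defs
begin

text \<open>Since the vertices are ordered by real part, a segment \<open>[z i, z j]\<close> with \<open>i < j\<close> can only
meet the cuts at the intermediate vertices \<open>z m\<close>, \<open>i < m < j\<close>, and it avoids such a cut iff the
segment passes above \<open>z m\<close> when the cut points up and below it when the cut points down.
Put the first \<open>n\<close> vertices on the convex parabola \<open>y = x\<^sup>2\<close> with downward cuts: then all
\<open>n choose 2\<close> segments among them are short geodesics.  The vertex \<open>z (n+1)\<close> is placed at height
\<open>n\<^sup>2 + n + t + 1/2\<close>, where it sees exactly \<open>z 1, \<dots>, z t\<close> and \<open>z n\<close>; the remaining vertices
have upward cuts and at least double in height at each step, so each of them sees only its
predecessor.  This gives
\<open>(n choose 2) + (t + 1) + (d - n - 1)\<close> short geodesics, and these numbers exhaust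
\<open>{d - 1 .. d choose 2}\<close> for \<open>1 \<le> n < d\<close>, \<open>t < n\<close>.\<close>

definition chord :: "complex \<Rightarrow> complex \<Rightarrow> real \<Rightarrow> real" where
  "chord a b x = Im a + (Im b - Im a) * (x - Re a) / (Re b - Re a)"

lemma closed_segment_Im_eq_chord:
  assumes "w \<in> closed_segment a b" "Re a < Re b"
  shows "Im w = chord a b (Re w)" "Re a \<le> Re w" "Re w \<le> Re b"
proof -
  obtain u where u: "0 \<le> u" "u \<le> 1" "w = (1 - u) *\<^sub>R a + u *\<^sub>R b"
    using assms(1) unfolding closed_segment_def by auto
  have re: "Re w = Re a + u * (Re b - Re a)" and im: "Im w = Im a + u * (Im b - Im a)"
    by (simp_all add: u(3) algebra_simps)
  have "u = (Re w - Re a) / (Re b - Re a)"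
    using re assms(2) by (simp add: field_simps)
  then show "Im w = chord a b (Re w)"
    using im by (simp add: chord_def)
  have "0 \<le> u * (Re b - Re a)" "u * (Re b - Re a) \<le> Re b - Re a"
    using u assms(2) by (simp_all add: mult_left_le_one_le)
  then show "Re a \<le> Re w" "Re w \<le> Re b"
    unfolding re by linarith+
qed

lemma Complex_chord_in_closed_segment:
  assumes "Re a < x" "x < Re b"
  shows "Complex x (chord a b x) \<in> closed_segment a b"
proof -
  define u where "u = (x - Re a) / (Re b - Re a)"
  have u: "0 \<le> u" "u \<le> 1"
    using assms by (auto simp: u_def field_simps)
  have "u * (Re b - Re a) = x - Re a" "chord a b x = Im a + u * (Im b - Im a)"
    using assms by (simp_all add: u_def chord_def)
  then have "Complex x (chord a b x) = (1 - u) *\<^sub>R a + u *\<^sub>R b"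
    by (simp add: complex_eq_iff algebra_simps)
  then show ?thesis
    using u unfolding closed_segment_def by blast
qed

lemma mem_cut_iff:
  "w \<in> cut z up m \<longleftrightarrow>
     Re w = Re (z m) \<and> (if up m then Im (z m) \<le> Im w else Im w \<le> Im (z m))"
  unfolding cut_def by (cases w) auto

lemma short_geodesic_commute: "short_geodesic d z up i j = short_geodesic d z up j i"
  unfolding short_geodesic_def by (auto simp: closed_segment_commute insert_commute)

lemma short_geodesic_iff_chord:
  assumes inc: "\<forall>i\<in>{1..d}. \<forall>j\<in>{1..d}. i < j \<longrightarrow> Re (z i) < Re (z j)"
    and ij: "1 \<le> i" "i < j" "j \<le> d"
  shows "short_geodesic d z up i j \<longleftrightarrow>
    (\<forall>m. i < m \<and> m < j \<longrightarrow>
      (if up m then chord (z i) (z j) (Re (z m)) < Im (z m)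
       else Im (z m) < chord (z i) (z j) (Re (z m))))"
    (is "_ \<longleftrightarrow> (\<forall>m. _ \<longrightarrow> ?avoids m)")
proof
  assume short: "short_geodesic d z up i j"
  show "\<forall>m. i < m \<and> m < j \<longrightarrow> ?avoids m"
  proof (intro allI impI)
    fix m assume m: "i < m \<and> m < j"
    define w where "w = Complex (Re (z m)) (chord (z i) (z j) (Re (z m)))"
    have "Re (z i) < Re (z m)" "Re (z m) < Re (z j)"
      using inc m ij by auto
    then have "w \<in> closed_segment (z i) (z j)" "w \<noteq> z i" "w \<noteq> z j"
      unfolding w_def by (auto simp: complex_eq_iff intro: Complex_chord_in_closed_segment)
    moreover have "m \<in> {2..d-1}"
      using m ij by auto
    ultimately have "w \<notin> cut z up m"
      using short unfolding short_geodesic_def by blast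
    then show "?avoids m"
      unfolding mem_cut_iff w_def by auto
  qed
next
  assume avoids: "\<forall>m. i < m \<and> m < j \<longrightarrow> ?avoids m"
  have rij: "Re (z i) < Re (z j)"
    using inc ij by auto
  show "short_geodesic d z up i j"
    unfolding short_geodesic_def
  proof (intro conjI ballI subsetI)
    show "i \<in> {1..d}" "j \<in> {1..d}" "i \<noteq> j"
      using ij by auto
  next
    fix m w assume m: "m \<in> {2..d-1}" and w: "w \<in> closed_segment (z i) (z j) \<inter> cut z up m"
    have w_seg: "Im w = chord (z i) (z j) (Re w)" "Re (z i) \<le> Re w" "Re w \<le> Re (z j)"
      using closed_segment_Im_eq_chord[of w "z i" "z j"] w rij by auto
    have w_cut: "Re w = Re (z m)" "if up m then Im (z m) \<le> Im w else Im w \<le> Im (z m)"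
      using w mem_cut_iff by blast+
    consider "m < i" | "m = i" | "i < m \<and> m < j" | "m = j" | "j < m"
      by linarith
    then show "w \<in> {z i, z j}"
    proof cases
      case 1
      then show ?thesis using inc m ij w_cut w_seg by force
    next
      case 2
      then show ?thesis using w_cut w_seg by (simp add: chord_def complex_eq_iff)
    next
      case 3
      then show ?thesis using avoids w_cut w_seg by (auto split: if_splits)
    next
      case 4
      then show ?thesis using w_cut w_seg rij by (simp add: chord_def complex_eq_iff)
    next
      case 5
      then show ?thesis using inc m ij w_cut w_seg by force
    qed
  qed
qed

definition left_visible :: "nat \<Rightarrow> (nat \<Rightarrow> complex) \<Rightarrow> (nat \<Rightarrow> bool) \<Rightarrow> nat \<Rightarrow> nat set" where
  "left_visible d z up j = {i. i < j \<and> short_geodesic d z up i j}"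

lemma left_visible_eq:
  assumes "j \<le> d"
  shows "left_visible d z up j = {i \<in> {1..<j}. short_geodesic d z up i j}"
  using assms by (auto simp: left_visible_def short_geodesic_def)

lemma num_short_geodesics_eq_sum_left_visible:
  "num_short_geodesics d z up = (\<Sum>j=1..d. card (left_visible d z up j))"
proof -
  let ?S = "SIGMA j:{1..d}. left_visible d z up j"
  have "{{i, j} | i j. short_geodesic d z up i j} = (\<lambda>(j, i). {i, j}) ` ?S"
  proof (intro set_eqI iffI)
    fix x assume "x \<in> {{i, j} | i j. short_geodesic d z up i j}"
    then obtain i j where x: "x = {i, j}" and short: "short_geodesic d z up i j"
      by blast
    then have "i \<in> {1..d}" "j \<in> {1..d}" "i \<noteq> j"
      unfolding short_geodesic_def by auto
    then have "(j, i) \<in> ?S \<or> (i, j) \<in> ?S"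
      using short short_geodesic_commute[of d z up i j]
      by (auto simp: left_visible_def)
    then show "x \<in> (\<lambda>(j, i). {i, j}) ` ?S"
      using x by (force simp: insert_commute)
  qed (auto simp: left_visible_def)
  moreover have "inj_on (\<lambda>(j, i). {i, j}) ?S"
    by (auto simp: inj_on_def doubleton_eq_iff left_visible_def)
  ultimately have "num_short_geodesics d z up = card ?S"
    unfolding num_short_geodesics_def by (simp add: card_image)
  also have "\<dots> = (\<Sum>j=1..d. card (left_visible d z up j))"
    by (rule card_SigmaI) (auto simp: left_visible_def)
  finally show ?thesis .
qed

lemma square_below_chord_of_squares:
  fixes i m j :: real
  assumes "i < m" "m < j"
  shows "m\<^sup>2 < i\<^sup>2 + (j\<^sup>2 - i\<^sup>2) * (m - i) / (j - i)"
proof -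
  have "(j\<^sup>2 - i\<^sup>2) * (m - i) / (j - i) = (j + i) * (m - i)"
    using assms by (simp add: field_simps power2_eq_square)
  moreover have "0 < (m - i) * (j - m)"
    using assms by simp
  ultimately show ?thesis
    by (simp add: algebra_simps power2_eq_square)
qed

text \<open>The chord from \<open>(i, i\<^sup>2)\<close> to \<open>(n + 1, h)\<close> passes above \<open>(n, n\<^sup>2)\<close> iff \<open>h > n\<^sup>2 + n + i\<close>.\<close>

lemma square_below_chord_to_high_point:
  fixes i m n h :: real
  assumes "i < m" "m \<le> n" "n\<^sup>2 + n + i < h"
  shows "m\<^sup>2 < i\<^sup>2 + (h - i\<^sup>2) * (m - i) / (n + 1 - i)"
proof -
  have pos: "0 < n + 1 - i"
    using assms by simp
  have "(m + i) * (n + 1 - i) \<le> (n + i) * (n + 1 - i)"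
    using pos assms by (intro mult_right_mono) auto
  also have "\<dots> = n\<^sup>2 + n + i - i\<^sup>2"
    by (simp add: algebra_simps power2_eq_square)
  finally have "(m + i) * (n + 1 - i) * (m - i) < (h - i\<^sup>2) * (m - i)"
    using assms by (intro mult_strict_right_mono) auto
  then have "(m + i) * (m - i) < (h - i\<^sup>2) * (m - i) / (n + 1 - i)"
    using pos by (simp add: field_simps)
  then show ?thesis
    by (simp add: algebra_simps power2_eq_square)
qed

lemma chord_to_low_point_below_square:
  fixes i n h :: real
  assumes "i < n" "h < n\<^sup>2 + n + i"
  shows "i\<^sup>2 + (h - i\<^sup>2) * (n - i) / (n + 1 - i) < n\<^sup>2"
proof -
  have pos: "0 < n + 1 - i"
    using assms by simp
  have "(n + i) * (n + 1 - i) = n\<^sup>2 + n + i - i\<^sup>2"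
    by (simp add: algebra_simps power2_eq_square)
  then have "(h - i\<^sup>2) * (n - i) < (n + i) * (n + 1 - i) * (n - i)"
    using assms by (intro mult_strict_right_mono) auto
  then have "(h - i\<^sup>2) * (n - i) / (n + 1 - i) < (n + i) * (n - i)"
    using pos by (simp add: field_simps)
  then show ?thesis
    by (simp add: algebra_simps power2_eq_square)
qed

lemma half_le_chord_at_pred:
  fixes a b c i j :: real
  assumes "0 \<le> a" "a \<le> b" "2 * c \<le> b" "i + 2 \<le> j"
  shows "c \<le> a + (b - a) * (j - 1 - i) / (j - i)"
proof -
  have "(b - a) * (1 / 2) \<le> (b - a) * ((j - 1 - i) / (j - i))"
    using assms by (intro mult_left_mono) (auto simp: field_simps)
  then have "a + (b - a) / 2 \<le> a + (b - a) * (j - 1 - i) / (j - i)"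
    by simp
  moreover have "c \<le> a + (b - a) / 2"
    using assms by (simp add: field_simps)
  ultimately show ?thesis
    by linarith
qed

lemma choose2_Suc: "Suc n choose 2 = (n choose 2) + n"
  using binomial_Suc_Suc[of n 1] by (simp add: numeral_2_eq_2)

lemma sum_pred_eq_choose2: "(\<Sum>j=1..n. j - 1) = (n choose 2)"
  by (induction n) (simp_all add: choose2_Suc)

lemma choose2_decomposition:
  assumes "e \<le> Suc q choose 2"
  shows "\<exists>p\<le>q. \<exists>t\<le>p. e = (p choose 2) + t"
  using assms
proof (induction q)
  case 0
  then show ?case by (simp add: binomial_eq_0)
next
  case (Suc q)
  show ?case
  proof (cases "e \<le> Suc q choose 2")
    case True
    then show ?thesis using Suc.IH le_SucI by blast
  next
    case False
    define t where "t = e - (Suc q choose 2)"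
    have "t \<le> Suc q" "e = (Suc q choose 2) + t"
      using False Suc.prems choose2_Suc[of "Suc q"] unfolding t_def by linarith+
    then show ?thesis by blast
  qed
qed

definition staircase_height :: "nat \<Rightarrow> nat \<Rightarrow> nat \<Rightarrow> real" where
  "staircase_height n t j =
     (if j \<le> n then (real j)\<^sup>2
      else if j = n + 1 then (real n)\<^sup>2 + real n + real t + 1/2
      else (real n + 1)\<^sup>2 * 4 ^ (j - n))"

definition staircase_vertex :: "nat \<Rightarrow> nat \<Rightarrow> nat \<Rightarrow> complex" where
  "staircase_vertex n t j = Complex (real j) (staircase_height n t j)"

definition staircase_up :: "nat \<Rightarrow> nat \<Rightarrow> bool" where
  "staircase_up n m \<longleftrightarrow> n < m"

context
  fixes n t :: nat
  assumes t_less_n: "t < n"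
begin

lemma staircase_height_strict_mono: "strict_mono (staircase_height n t)"
proof (rule strict_monoI_Suc)
  fix j
  have "real t < real n" "0 \<le> real n * real n"
    using t_less_n by simp_all
  then consider "Suc j \<le> n" | "j = n" | "j = n + 1" | "n + 2 \<le> j"
    by linarith
  then show "staircase_height n t j < staircase_height n t (Suc j)"
  proof cases
    case 1
    then show ?thesis by (simp add: staircase_height_def power_strict_mono)
  next
    case 2
    then show ?thesis by (simp add: staircase_height_def)
  next
    case 3
    then have "Suc j - n = 2" by simp
    then show ?thesis
      using 3 by (simp add: staircase_height_def power2_eq_square algebra_simps)
        (use \<open>real t < real n\<close> \<open>0 \<le> real n * real n\<close> in linarith)
  next
    case 4
    then have "Suc j - n = Suc (j - n)" by simp
    then show ?thesis
      using 4 by (simp add: staircase_height_def)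
  qed
qed

lemma staircase_height_nonneg: "0 \<le> staircase_height n t j"
  by (simp add: staircase_height_def)

lemma staircase_height_doubles:
  assumes "n + 2 \<le> j"
  shows "2 * staircase_height n t (j - 1) \<le> staircase_height n t j"
proof (cases "j = n + 2")
  case True
  have "real t < real n" "0 \<le> real n * real n"
    using t_less_n by simp_all
  then show ?thesis
    using True by (simp add: staircase_height_def power2_eq_square algebra_simps)
      (use \<open>real t < real n\<close> \<open>0 \<le> real n * real n\<close> in linarith)
next
  case False
  then have "j - n = Suc (j - 1 - n)" "\<not> j - 1 \<le> n" "j - 1 \<noteq> n + 1"
    using assms by simp_all
  then show ?thesis
    using assms False by (simp add: staircase_height_def)
qed

lemma chopped_strip_staircase: "chopped_strip d (staircase_vertex n t) up"
  using strict_mono_eq[OF staircase_height_strict_mono]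
  by (auto simp: chopped_strip_def staircase_vertex_def)

lemma staircase_short_geodesic_iff:
  assumes "1 \<le> i" "i < j" "j \<le> d"
  shows "short_geodesic d (staircase_vertex n t) (staircase_up n) i j \<longleftrightarrow>
    (\<forall>m. i < m \<and> m < j \<longrightarrow>
      (let y = staircase_height n t;
           c = y i + (y j - y i) * (real m - real i) / (real j - real i)
       in if n < m then c < y m else y m < c))"
  using short_geodesic_iff_chord[OF _ assms, of "staircase_vertex n t" "staircase_up n"]
  by (simp add: staircase_vertex_def staircase_up_def chord_def Let_def)


lemma left_visible_staircase_parabola:
  assumes "j \<le> n" "n \<le> d"
  shows "left_visible d (staircase_vertex n t) (staircase_up n) j = {1..<j}"
proof -
  have "short_geodesic d (staircase_vertex n t) (staircase_up n) i j" if "i \<in> {1..<j}" for i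
    using that assms square_below_chord_of_squares[of "real i" "real m" "real j" for m]
    by (subst staircase_short_geodesic_iff) (auto simp: staircase_height_def Let_def)
  then show ?thesis
    using assms by (auto simp: left_visible_eq)
qed

lemma left_visible_staircase_apex:
  assumes "n + 1 \<le> d"
  shows "left_visible d (staircase_vertex n t) (staircase_up n) (n + 1) = insert n {1..t}"
proof -
  let ?h = "staircase_height n t (n + 1)"
  have short_iff: "short_geodesic d (staircase_vertex n t) (staircase_up n) i (n + 1) \<longleftrightarrow>
      (\<forall>m. i < m \<and> m \<le> n \<longrightarrow>
        (real m)\<^sup>2 < (real i)\<^sup>2 + (?h - (real i)\<^sup>2) * (real m - real i) / (real n + 1 - real i))"
    if "1 \<le> i" "i \<le> n" for i
    using that assms
    by (subst staircase_short_geodesic_iff)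
      (auto simp: staircase_height_def Let_def less_Suc_eq_le add.commute[of 1])
  have "short_geodesic d (staircase_vertex n t) (staircase_up n) i (n + 1) \<longleftrightarrow> i \<in> insert n {1..t}"
    if i: "1 \<le> i" "i \<le> n" for i
  proof (cases "i \<le> t \<or> i = n")
    case True
    have "short_geodesic d (staircase_vertex n t) (staircase_up n) i (n + 1)"
      unfolding short_iff[OF i]
    proof (intro allI impI)
      fix m assume m: "i < m \<and> m \<le> n"
      then have "i \<le> t"
        using True by auto
      then show "(real m)\<^sup>2 < (real i)\<^sup>2 + (?h - (real i)\<^sup>2) * (real m - real i) / (real n + 1 - real i)"
        using m by (intro square_below_chord_to_high_point) (auto simp: staircase_height_def)
    qed
    then show ?thesis
      using True i by auto
  next
    case False
    then have "i < n" "t < i"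
      using i by auto
    have "?h < (real n)\<^sup>2 + real n + real i"
      using \<open>t < i\<close> by (simp add: staircase_height_def)
    then have "(real i)\<^sup>2 + (?h - (real i)\<^sup>2) * (real n - real i) / (real n + 1 - real i) < (real n)\<^sup>2"
      using \<open>i < n\<close> by (intro chord_to_low_point_below_square) auto
    then have "\<not> short_geodesic d (staircase_vertex n t) (staircase_up n) i (n + 1)"
      unfolding short_iff[OF i] using \<open>i < n\<close> by (meson less_asym order.refl)
    then show ?thesis
      using False by auto
  qed
  then show ?thesis
    using assms t_less_n by (auto simp: left_visible_eq)
qed

lemma left_visible_staircase_tail:
  assumes "n + 2 \<le> j" "j \<le> d"
  shows "left_visible d (staircase_vertex n t) (staircase_up n) j = {j - 1}"
proof -
  let ?y = "staircase_height n t"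
  have "\<not> short_geodesic d (staircase_vertex n t) (staircase_up n) i j" if i: "1 \<le> i" "i + 2 \<le> j" for i
  proof
    assume "short_geodesic d (staircase_vertex n t) (staircase_up n) i j"
    moreover have "i < j"
      using i by simp
    ultimately have "\<forall>m. i < m \<and> m < j \<longrightarrow> (let y = ?y;
        c = y i + (y j - y i) * (real m - real i) / (real j - real i) in if n < m then c < y m else y m < c)"
      using staircase_short_geodesic_iff[OF i(1) _ assms(2)] by blast
    moreover have "i < j - 1" "j - 1 < j" "n < j - 1"
      using i assms by auto
    ultimately have "?y (j - 1) > ?y i + (?y j - ?y i) * (real (j - 1) - real i) / (real j - real i)"
      by (auto simp: Let_def dest: spec[of _ "j - 1"])
    moreover have "?y i \<le> ?y j"
      using i strict_mono_less_eq[OF staircase_height_strict_mono] by simp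
    then have "?y (j - 1) \<le> ?y i + (?y j - ?y i) * (real j - 1 - real i) / (real j - real i)"
      using i assms staircase_height_nonneg staircase_height_doubles
      by (intro half_le_chord_at_pred) auto
    ultimately show False
      using assms by (simp add: of_nat_diff)
  qed
  moreover have "short_geodesic d (staircase_vertex n t) (staircase_up n) (j - 1) j"
    using assms by (subst staircase_short_geodesic_iff) auto
  ultimately show ?thesis
    using assms by (force simp: left_visible_eq)
qed

lemma num_short_geodesics_staircase:
  assumes "n < d"
  shows "num_short_geodesics d (staircase_vertex n t) (staircase_up n) = (n choose 2) + (t + 1) + (d - (n + 1))"
proof -
  let ?c = "\<lambda>j. card (left_visible d (staircase_vertex n t) (staircase_up n) j)"
  have "{1..d} = {1..n} \<union> insert (n + 1) {n + 2..d}"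
    using assms by auto
  then have "(\<Sum>j=1..d. ?c j) = (\<Sum>j=1..n. ?c j) + ?c (n + 1) + (\<Sum>j=n+2..d. ?c j)"
    by (simp add: sum.union_disjoint add.assoc)
  also have "\<dots> = (\<Sum>j=1..n. j - 1) + (t + 1) + (\<Sum>j=n+2..d. 1)"
    using assms t_less_n left_visible_staircase_parabola left_visible_staircase_apex
      left_visible_staircase_tail
    by (intro arg_cong2[where f = "(+)"] sum.cong) auto
  finally show ?thesis
    using sum_pred_eq_choose2[of n] by (simp add: num_short_geodesics_eq_sum_left_visible)
qed

end

theorem mainTheorem5:
  fixes d k :: nat
  assumes "d \<ge> 2" and "d - 1 \<le> k" and "k \<le> d choose 2"
  shows "\<exists>z up. chopped_strip d z up \<and> num_short_geodesics d z up = k"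
proof -
  obtain q where q: "d = Suc (Suc q)"
    using assms(1) by (metis add_2_eq_Suc le_Suc_ex)
  have "k - (d - 1) \<le> Suc q choose 2"
    using assms(3) choose2_Suc[of "Suc q"] q by simp
  then obtain p t where p: "p \<le> q" "t \<le> p" "k - (d - 1) = (p choose 2) + t"
    using choose2_decomposition by blast
  have "t < Suc p" "Suc p < d"
    using p q by auto
  moreover have "k = (Suc p choose 2) + (t + 1) + (d - (Suc p + 1))"
    using p q assms(2) choose2_Suc[of p] by simp
  ultimately show ?thesis
    using chopped_strip_staircase num_short_geodesics_staircase by blast
qed

end
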